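(* Let $A=(a_{ij})$ and $B=(b_{ij})$ be two $n\times n$ generalized tournament matrices. If $A$ and $B$ have the same principal minors of orders $2$ and $3$, then the connected components of $\mathcal{E}(A,B)$ and of $\mathcal{D}(A,B)$ are clans of $A$ and of $B$.
   Context: A generalized tournament matrix of order $n$ is a real $n\times n$ matrix $M=(m_{ij})$ with nonnegative entries satisfying $M+M^{t}=J_n-I_n$. Write $[n]=\{1,\ldots,n\}$. A clan of $M$ is a subset $X\subseteq[n]$ such that for all $i,j\in X$ and $k\in[n]\setminus X$, $m_{ik}=m_{jk}$ and $m_{ki}=m_{kj}$. When $A,B$ have the same principal minors of order $2$, for $i\neq j$ one has $a_{ij}=b_{ij}$ or $a_{ij}=1-b_{ij}$. Let $P_{=}=\{\{i,j\}: a_{ij}=b_{ij},\ a_{ij}\neq 1/2\}$ and $P_{\neq}=\{\{i,j\}: a_{ij}=1-b_{ij},\ a_{ij}\neq 1/2\}$. The equality graph $\mathcal{E}(A,B)$ and the difference graph $\mathcal{D}(A,B)$ are the undirected graphs on vertex set $[n]$ with edge sets $P_{=}$ and $P_{\neq}$ respectively. *)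

theory Defs
  imports "Jordan_Normal_Form.Determinant" "Jordan_Normal_Form.DL_Submatrix"
begin

text \<open>Matrices are n x n real matrices (type real mat); indices 0..<n play the role of [n].\<close>

definition gen_tournament :: "nat \<Rightarrow> real mat \<Rightarrow> bool" where
  "gen_tournament n M \<longleftrightarrow> M \<in> carrier_mat n n \<and>
     (\<forall>i<n. \<forall>j<n. M $$ (i,j) \<ge> 0) \<and>
     (\<forall>i<n. \<forall>j<n. M $$ (i,j) + M $$ (j,i) = (if i = j then 0 else 1))"

definition same_principal_minors :: "nat \<Rightarrow> nat \<Rightarrow> real mat \<Rightarrow> real mat \<Rightarrow> bool" where
  "same_principal_minors n k A B \<longleftrightarrow>
     (\<forall>I. I \<subseteq> {0..<n} \<longrightarrow> card I = k \<longrightarrow> det (submatrix A I I) = det (submatrix B I I))"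

definition clan :: "nat \<Rightarrow> real mat \<Rightarrow> nat set \<Rightarrow> bool" where
  "clan n M X \<longleftrightarrow> X \<subseteq> {0..<n} \<and>
     (\<forall>i\<in>X. \<forall>j\<in>X. \<forall>k\<in>{0..<n} - X. M $$ (i,k) = M $$ (j,k) \<and> M $$ (k,i) = M $$ (k,j))"

definition eq_graph :: "nat \<Rightarrow> real mat \<Rightarrow> real mat \<Rightarrow> (nat \<times> nat) set" where
  "eq_graph n A B = {(i,j). i < n \<and> j < n \<and> i \<noteq> j \<and>
     ((A $$ (i,j) = B $$ (i,j) \<and> A $$ (i,j) \<noteq> 1/2) \<or> (A $$ (j,i) = B $$ (j,i) \<and> A $$ (j,i) \<noteq> 1/2))}"

definition diff_graph :: "nat \<Rightarrow> real mat \<Rightarrow> real mat \<Rightarrow> (nat \<times> nat) set" where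
  "diff_graph n A B = {(i,j). i < n \<and> j < n \<and> i \<noteq> j \<and>
     ((A $$ (i,j) = 1 - B $$ (i,j) \<and> A $$ (i,j) \<noteq> 1/2) \<or> (A $$ (j,i) = 1 - B $$ (j,i) \<and> A $$ (j,i) \<noteq> 1/2))}"

definition components :: "nat \<Rightarrow> (nat \<times> nat) set \<Rightarrow> nat set set" where
  "components n E = (\<lambda>v. {w. w < n \<and> (v, w) \<in> E\<^sup>*}) ` {0..<n}"

end

theory Submission
  imports Defs
begin

text \<open>For a generalized tournament matrix the principal minors of orders 2 and 3 are
  \<open>-a\<^sub>i\<^sub>j (1 - a\<^sub>i\<^sub>j)\<close> and \<open>a\<^sub>i\<^sub>j a\<^sub>j\<^sub>k a\<^sub>k\<^sub>i + a\<^sub>i\<^sub>k a\<^sub>k\<^sub>j a\<^sub>j\<^sub>i\<close>.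
  Equal 2-minors force \<open>b\<^sub>i\<^sub>j \<in> {a\<^sub>i\<^sub>j, 1 - a\<^sub>i\<^sub>j}\<close>. If \<open>{i,j}\<close> is an edge of the equality
  graph and \<open>k\<close> is adjacent to neither endpoint, then \<open>b\<^sub>i\<^sub>k = 1 - a\<^sub>i\<^sub>k\<close> and
  \<open>b\<^sub>j\<^sub>k = 1 - a\<^sub>j\<^sub>k\<close>, and the difference of the two 3-minors on \<open>{i,j,k}\<close> is
  \<open>(2 a\<^sub>i\<^sub>j - 1)(a\<^sub>j\<^sub>k - a\<^sub>i\<^sub>k)\<close>; as \<open>a\<^sub>i\<^sub>j \<noteq> 1/2\<close>, the vertex \<open>k\<close> sees \<open>i\<close> and \<open>j\<close> alike.
  Propagating this along paths makes every component a clan. The difference graph of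
  \<open>(A, B)\<close> is the equality graph of \<open>(A, B\<^sup>T)\<close>, and \<open>B\<^sup>T\<close> is again a generalized
  tournament with the same principal minors as \<open>B\<close>.\<close>

lemma det_2x2:
  fixes M :: "'a::comm_ring_1 mat"
  assumes "M \<in> carrier_mat 2 2"
  shows "det M = M $$ (0,0) * M $$ (1,1) - M $$ (0,1) * M $$ (1,0)"
proof -
  have "mat_delete M i j \<in> carrier_mat 1 1" for i j
    using mat_delete_carrier[OF assms] by simp
  then show ?thesis
    using assms
    by (simp add: laplace_expansion_row[OF assms, of 0] cofactor_def numeral_2_eq_2 lessThan_Suc
        det_single mat_delete_def insert_index_def)
qed

lemma det_3x3:
  fixes M :: "'a::comm_ring_1 mat"
  assumes "M \<in> carrier_mat 3 3"
  shows "det M =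
      M $$ (0,0) * (M $$ (1,1) * M $$ (2,2) - M $$ (1,2) * M $$ (2,1))
    - M $$ (0,1) * (M $$ (1,0) * M $$ (2,2) - M $$ (1,2) * M $$ (2,0))
    + M $$ (0,2) * (M $$ (1,0) * M $$ (2,1) - M $$ (1,1) * M $$ (2,0))"
proof -
  have "mat_delete M i j \<in> carrier_mat 2 2" for i j
    using mat_delete_carrier[OF assms] by simp
  then show ?thesis
    using assms
    by (simp add: laplace_expansion_row[OF assms, of 0] cofactor_def numeral_3_eq_3 lessThan_Suc
        det_2x2 mat_delete_def insert_index_def numeral_2_eq_2 algebra_simps)
qed

lemma submatrix_principal_carrier:
  assumes "M \<in> carrier_mat n n" and "I \<subseteq> {0..<n}"
  shows "submatrix M I I \<in> carrier_mat (card I) (card I)"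
proof -
  have "{i. i < dim_row M \<and> i \<in> I} = I" "{i. i < dim_col M \<and> i \<in> I} = I"
    using assms by auto
  then show ?thesis by (intro carrier_matI) (simp_all only: dim_submatrix)
qed

lemma submatrix_principal_index:
  assumes "M \<in> carrier_mat n n" and "I \<subseteq> {0..<n}" and "x \<in> I" "y \<in> I"
    and "card {a\<in>I. a < x} = i" "card {a\<in>I. a < y} = j"
  shows "submatrix M I I $$ (i,j) = M $$ (x,y)"
proof -
  have "x < dim_row M" "y < dim_col M" using assms(1-4) by auto
  then show ?thesis using submatrix_index_card[of x M y I I] assms(3-6) by simp
qed

lemma det_principal_submatrix_2_sorted:
  fixes M :: "'a::comm_ring_1 mat"
  assumes M: "M \<in> carrier_mat n n" and "p < q" "q < n"
  shows "det (submatrix M {p,q} {p,q}) = M $$ (p,p) * M $$ (q,q) - M $$ (p,q) * M $$ (q,p)"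
proof -
  let ?I = "{p,q}"
  have sub: "?I \<subseteq> {0..<n}" using assms by auto
  have "card ?I = 2" using assms by simp
  then have car: "submatrix M ?I ?I \<in> carrier_mat 2 2"
    using submatrix_principal_carrier[OF M sub] by simp
  have "{a\<in>?I. a < p} = {}" "{a\<in>?I. a < q} = {p}" using assms by auto
  then have rank: "card {a\<in>?I. a < p} = 0" "card {a\<in>?I. a < q} = 1" by simp_all
  note entry = submatrix_principal_index[OF M sub]
  have "submatrix M ?I ?I $$ (0,0) = M $$ (p,p)" "submatrix M ?I ?I $$ (0,1) = M $$ (p,q)"
    "submatrix M ?I ?I $$ (1,0) = M $$ (q,p)" "submatrix M ?I ?I $$ (1,1) = M $$ (q,q)"
    by (rule entry; (simp only: rank)?; simp)+
  then show ?thesis unfolding det_2x2[OF car] by simp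
qed

lemma det_principal_submatrix_2:
  fixes M :: "'a::comm_ring_1 mat"
  assumes M: "M \<in> carrier_mat n n" and "p < n" "q < n" "p \<noteq> q"
  shows "det (submatrix M {p,q} {p,q}) = M $$ (p,p) * M $$ (q,q) - M $$ (p,q) * M $$ (q,p)"
proof (cases "p < q")
  case True
  then show ?thesis using det_principal_submatrix_2_sorted[OF M] assms(3) by blast
next
  case False
  have "{p,q} = {q,p}" by auto
  with False show ?thesis
    using det_principal_submatrix_2_sorted[OF M, of q p] assms by (simp add: algebra_simps)
qed

lemma det_principal_submatrix_3_sorted:
  fixes M :: "'a::comm_ring_1 mat"
  assumes M: "M \<in> carrier_mat n n" and "p < q" "q < r" "r < n"
  shows "det (submatrix M {p,q,r} {p,q,r}) =
      M $$ (p,p) * M $$ (q,q) * M $$ (r,r) + M $$ (p,q) * M $$ (q,r) * M $$ (r,p)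
    + M $$ (p,r) * M $$ (r,q) * M $$ (q,p) - M $$ (p,p) * M $$ (q,r) * M $$ (r,q)
    - M $$ (q,q) * M $$ (p,r) * M $$ (r,p) - M $$ (r,r) * M $$ (p,q) * M $$ (q,p)"
proof -
  let ?I = "{p,q,r}"
  have sub: "?I \<subseteq> {0..<n}" using assms by auto
  have "card ?I = 3" using assms by simp
  then have car: "submatrix M ?I ?I \<in> carrier_mat 3 3"
    using submatrix_principal_carrier[OF M sub] by simp
  have "{a\<in>?I. a < p} = {}" "{a\<in>?I. a < q} = {p}" "{a\<in>?I. a < r} = {p,q}"
    using assms by auto
  then have rank: "card {a\<in>?I. a < p} = 0" "card {a\<in>?I. a < q} = 1"
    "card {a\<in>?I. a < r} = 2"
    using assms by simp_all
  note entry = submatrix_principal_index[OF M sub]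
  have "submatrix M ?I ?I $$ (0,0) = M $$ (p,p)" "submatrix M ?I ?I $$ (0,1) = M $$ (p,q)"
    "submatrix M ?I ?I $$ (0,2) = M $$ (p,r)" "submatrix M ?I ?I $$ (1,0) = M $$ (q,p)"
    "submatrix M ?I ?I $$ (1,1) = M $$ (q,q)" "submatrix M ?I ?I $$ (1,2) = M $$ (q,r)"
    "submatrix M ?I ?I $$ (2,0) = M $$ (r,p)" "submatrix M ?I ?I $$ (2,1) = M $$ (r,q)"
    "submatrix M ?I ?I $$ (2,2) = M $$ (r,r)"
    by (rule entry; (simp only: rank)?; simp)+
  then show ?thesis unfolding det_3x3[OF car] by (simp add: algebra_simps)
qed

lemma det_principal_submatrix_3:
  fixes M :: "'a::comm_ring_1 mat"
  assumes M: "M \<in> carrier_mat n n" and "p < n" "q < n" "r < n" "p \<noteq> q" "p \<noteq> r" "q \<noteq> r"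
  shows "det (submatrix M {p,q,r} {p,q,r}) =
      M $$ (p,p) * M $$ (q,q) * M $$ (r,r) + M $$ (p,q) * M $$ (q,r) * M $$ (r,p)
    + M $$ (p,r) * M $$ (r,q) * M $$ (q,p) - M $$ (p,p) * M $$ (q,r) * M $$ (r,q)
    - M $$ (q,q) * M $$ (p,r) * M $$ (r,p) - M $$ (r,r) * M $$ (p,q) * M $$ (q,p)"
    (is "_ = ?f p q r")
proof -
  note sorted = det_principal_submatrix_3_sorted[OF M]
  have permuted: "det (submatrix M {p,q,r} {p,q,r}) = ?f p q r"
    if "{a,b,c} = {p,q,r}" "?f a b c = ?f p q r" "a < b" "b < c" "c < n" for a b c
    using sorted[OF that(3-5)] unfolding that(1,2) .
  consider "p < q" "q < r" | "q < p" "p < r" | "p < r" "r < q"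
    | "r < p" "p < q" | "q < r" "r < p" | "r < q" "q < p"
    using assms(5-7) by (meson linorder_neqE_nat)
  then show ?thesis
  proof cases
    case 1
    then show ?thesis using sorted assms(4) by blast
  next
    case 2
    show ?thesis by (rule permuted[of q p r]) (use 2 assms(4) in \<open>auto simp: algebra_simps\<close>)
  next
    case 3
    show ?thesis by (rule permuted[of p r q]) (use 3 assms(3) in \<open>auto simp: algebra_simps\<close>)
  next
    case 4
    show ?thesis by (rule permuted[of r p q]) (use 4 assms(3) in \<open>auto simp: algebra_simps\<close>)
  next
    case 5
    show ?thesis by (rule permuted[of q r p]) (use 5 assms(2) in \<open>auto simp: algebra_simps\<close>)
  next
    case 6
    show ?thesis by (rule permuted[of r q p]) (use 6 assms(2) in \<open>auto simp: algebra_simps\<close>)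
  qed
qed

lemma gen_tournament_carrier: "gen_tournament n M \<Longrightarrow> M \<in> carrier_mat n n"
  unfolding gen_tournament_def by simp

lemma gen_tournament_diag:
  assumes "gen_tournament n M" and "i < n"
  shows "M $$ (i,i) = 0"
proof -
  have "M $$ (i,i) + M $$ (i,i) = 0" using assms unfolding gen_tournament_def by auto
  then show ?thesis by simp
qed

lemma gen_tournament_antisym:
  assumes "gen_tournament n M" and "i < n" "j < n" "i \<noteq> j"
  shows "M $$ (j,i) = 1 - M $$ (i,j)"
  using assms unfolding gen_tournament_def by (metis add_diff_cancel_left')

lemma gen_tournament_minor_2:
  assumes "gen_tournament n M" and "i < n" "j < n" "i \<noteq> j"
  shows "det (submatrix M {i,j} {i,j}) = - M $$ (i,j) * (1 - M $$ (i,j))"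
  using det_principal_submatrix_2[OF gen_tournament_carrier[OF assms(1)] assms(2-4)]
    gen_tournament_diag[OF assms(1)] gen_tournament_antisym[OF assms] assms(2,3)
  by simp

lemma gen_tournament_minor_3:
  assumes "gen_tournament n M" and "i < n" "j < n" "k < n" "i \<noteq> j" "i \<noteq> k" "j \<noteq> k"
  shows "det (submatrix M {i,j,k} {i,j,k}) =
    M $$ (i,j) * M $$ (j,k) * (1 - M $$ (i,k)) + M $$ (i,k) * (1 - M $$ (j,k)) * (1 - M $$ (i,j))"
  using det_principal_submatrix_3[OF gen_tournament_carrier[OF assms(1)] assms(2-7)]
    gen_tournament_diag[OF assms(1)] assms(2-4)
    gen_tournament_antisym[OF assms(1,2,3,5)] gen_tournament_antisym[OF assms(1,2,4,6)]
    gen_tournament_antisym[OF assms(1,3,4,7)]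
  by (simp add: algebra_simps)

lemma same_principal_minors_2_entry_cases:
  assumes "gen_tournament n A" "gen_tournament n B" "same_principal_minors n 2 A B"
    and "i < n" "j < n" "i \<noteq> j"
  shows "B $$ (i,j) = A $$ (i,j) \<or> B $$ (i,j) = 1 - A $$ (i,j)"
proof -
  have "det (submatrix A {i,j} {i,j}) = det (submatrix B {i,j} {i,j})"
    using assms(3-6) unfolding same_principal_minors_def by auto
  then have "(B $$ (i,j) - A $$ (i,j)) * (B $$ (i,j) - (1 - A $$ (i,j))) = 0"
    unfolding gen_tournament_minor_2[OF assms(1,4-6)] gen_tournament_minor_2[OF assms(2,4-6)]
    by (simp add: algebra_simps)
  then show ?thesis by auto
qed

lemma same_principal_minors_3_entries_agree:
  assumes "gen_tournament n A" "gen_tournament n B" "same_principal_minors n 3 A B"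
    and ijk: "i < n" "j < n" "k < n" "i \<noteq> j" "i \<noteq> k" "j \<noteq> k"
    and edge: "B $$ (i,j) = A $$ (i,j)" "A $$ (i,j) \<noteq> 1/2"
    and non_edges: "B $$ (i,k) = 1 - A $$ (i,k)" "B $$ (j,k) = 1 - A $$ (j,k)"
  shows "A $$ (i,k) = A $$ (j,k)"
proof -
  have "(2 * A $$ (i,j) - 1) * (A $$ (j,k) - A $$ (i,k))
      = det (submatrix A {i,j,k} {i,j,k}) - det (submatrix B {i,j,k} {i,j,k})"
    unfolding gen_tournament_minor_3[OF assms(1) ijk] gen_tournament_minor_3[OF assms(2) ijk]
      edge(1) non_edges
    by (simp add: algebra_simps)
  also have "\<dots> = 0"
    using assms(3) ijk unfolding same_principal_minors_def by auto
  finally show ?thesis using edge(2) by auto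
qed

lemma component_clanI:
  assumes "C \<in> components n E"
    and "\<And>i j k. (i,j) \<in> E \<Longrightarrow> k < n \<Longrightarrow> k \<noteq> i \<Longrightarrow> k \<noteq> j \<Longrightarrow> (i,k) \<notin> E \<Longrightarrow> (j,k) \<notin> E
      \<Longrightarrow> M $$ (i,k) = M $$ (j,k) \<and> M $$ (k,i) = M $$ (k,j)"
  shows "clan n M C"
proof -
  obtain v where C: "C = {w. w < n \<and> (v,w) \<in> E\<^sup>*}"
    using assms(1) unfolding components_def by auto
  have along_path: "M $$ (w,k) = M $$ (v,k) \<and> M $$ (k,w) = M $$ (k,v)"
    if k: "k < n" "(v,k) \<notin> E\<^sup>*" and "(v,w) \<in> E\<^sup>*" for w k
    using \<open>(v,w) \<in> E\<^sup>*\<close>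
  proof (induction rule: rtrancl_induct)
    case base
    show ?case by simp
  next
    case (step u u')
    then have "(v,u') \<in> E\<^sup>*" by simp
    then have "u \<noteq> k" "u' \<noteq> k" "(u,k) \<notin> E" "(u',k) \<notin> E"
      using step.hyps(1) k(2) by (auto intro: rtrancl_into_rtrancl)
    then show ?case using assms(2)[OF step.hyps(2) k(1)] step.IH by simp
  qed
  have "M $$ (i,k) = M $$ (j,k) \<and> M $$ (k,i) = M $$ (k,j)"
    if "i \<in> C" "j \<in> C" "k \<in> {0..<n} - C" for i j k
    using along_path[of k i] along_path[of k j] that unfolding C by auto
  moreover have "C \<subseteq> {0..<n}" unfolding C by auto
  ultimately show ?thesis unfolding clan_def by blast
qed

lemma eq_graph_edge:
  assumes "gen_tournament n A" "gen_tournament n B" and "(i,j) \<in> eq_graph n A B"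
  shows "i < n" "j < n" "i \<noteq> j" "B $$ (i,j) = A $$ (i,j)" "A $$ (i,j) \<noteq> 1/2"
proof -
  show ij: "i < n" "j < n" "i \<noteq> j" using assms(3) unfolding eq_graph_def by auto
  show "B $$ (i,j) = A $$ (i,j)" "A $$ (i,j) \<noteq> 1/2"
    using assms(3) gen_tournament_antisym[OF assms(1) ij] gen_tournament_antisym[OF assms(2) ij]
    unfolding eq_graph_def by auto
qed

text \<open>When \<open>a\<^sub>i\<^sub>j = 1/2\<close> the two alternatives for \<open>b\<^sub>i\<^sub>j\<close> coincide.\<close>

lemma eq_graph_non_edge:
  assumes "gen_tournament n A" "gen_tournament n B" "same_principal_minors n 2 A B"
    and "i < n" "j < n" "i \<noteq> j" "(i,j) \<notin> eq_graph n A B"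
  shows "B $$ (i,j) = 1 - A $$ (i,j)"
  using same_principal_minors_2_entry_cases[OF assms(1-6)] assms(4-7) unfolding eq_graph_def by auto

lemma eq_graph_component_clan:
  assumes gA: "gen_tournament n A" and gB: "gen_tournament n B"
    and "same_principal_minors n 2 A B" "same_principal_minors n 3 A B"
    and "C \<in> components n (eq_graph n A B)"
  shows "clan n A C" "clan n B C"
proof -
  have rows: "A $$ (i,k) = A $$ (j,k) \<and> B $$ (i,k) = B $$ (j,k)"
    if "(i,j) \<in> eq_graph n A B" "k < n" "k \<noteq> i" "k \<noteq> j"
      "(i,k) \<notin> eq_graph n A B" "(j,k) \<notin> eq_graph n A B" for i j k
  proof -
    note edge = eq_graph_edge[OF gA gB that(1)]
    have "B $$ (i,k) = 1 - A $$ (i,k)" "B $$ (j,k) = 1 - A $$ (j,k)"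
      using eq_graph_non_edge[OF assms(1-3)] edge(1,2) that(2-6) by auto
    moreover have "A $$ (i,k) = A $$ (j,k)"
      using same_principal_minors_3_entries_agree[OF assms(1,2,4) edge(1,2) that(2) edge(3)]
        edge(4,5) that(3,4) calculation by auto
    ultimately show ?thesis by simp
  qed
  have columns: "M $$ (k,i) = M $$ (k,j)"
    if "gen_tournament n M" "M $$ (i,k) = M $$ (j,k)" "(i,j) \<in> eq_graph n A B"
      "k < n" "k \<noteq> i" "k \<noteq> j" for M i j k
    using gen_tournament_antisym[OF that(1), of i k] gen_tournament_antisym[OF that(1), of j k]
      eq_graph_edge(1,2)[OF gA gB that(3)] that(2,4-6) by simp
  show "clan n A C" "clan n B C"
    using component_clanI[OF assms(5)] rows columns[OF gA] columns[OF gB] by meson+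
qed

lemma gen_tournament_transpose:
  assumes "gen_tournament n M"
  shows "gen_tournament n M\<^sup>T"
  using assms gen_tournament_diag[OF assms] unfolding gen_tournament_def by (auto simp: add.commute)

lemma submatrix_transpose: "submatrix M\<^sup>T I J = (submatrix M J I)\<^sup>T"
proof (rule eq_matI)
  fix i j
  assume "i < dim_row (submatrix M J I)\<^sup>T" "j < dim_col (submatrix M J I)\<^sup>T"
  then have i: "i < card {i. i < dim_col M \<and> i \<in> I}" and j: "j < card {j. j < dim_row M \<and> j \<in> J}"
    by (simp_all add: dim_submatrix)
  show "submatrix M\<^sup>T I J $$ (i,j) = (submatrix M J I)\<^sup>T $$ (i,j)"
    using i j pick_le[OF i] pick_le[OF j] by (simp add: submatrix_index dim_submatrix)
qed (simp_all add: dim_submatrix)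

lemma same_principal_minors_transpose:
  assumes "B \<in> carrier_mat n n" and "same_principal_minors n k A B"
  shows "same_principal_minors n k A B\<^sup>T"
  unfolding same_principal_minors_def
proof (intro allI impI)
  fix I assume I: "I \<subseteq> {0..<n}" "card I = k"
  have "det (submatrix B\<^sup>T I I) = det (submatrix B I I)"
    unfolding submatrix_transpose
    using det_transpose[OF submatrix_principal_carrier[OF assms(1) I(1)]] .
  moreover have "det (submatrix A I I) = det (submatrix B I I)"
    using assms(2) I unfolding same_principal_minors_def by blast
  ultimately show "det (submatrix A I I) = det (submatrix B\<^sup>T I I)" by simp
qed

lemma clan_transpose:
  assumes "M \<in> carrier_mat n n" and "clan n M X"
  shows "clan n M\<^sup>T X"
proof -
  have X: "X \<subseteq> {0..<n}" using assms(2) unfolding clan_def by blast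
  have "M\<^sup>T $$ (i,k) = M\<^sup>T $$ (j,k) \<and> M\<^sup>T $$ (k,i) = M\<^sup>T $$ (k,j)"
    if "i \<in> X" "j \<in> X" "k \<in> {0..<n} - X" for i j k
  proof -
    have "i < n" "j < n" "k < n" using X that by auto
    moreover have "dim_row M = n" "dim_col M = n" using assms(1) by auto
    moreover have "M $$ (i,k) = M $$ (j,k) \<and> M $$ (k,i) = M $$ (k,j)"
      using assms(2) that unfolding clan_def by blast
    ultimately show ?thesis by simp
  qed
  with X show ?thesis unfolding clan_def by blast
qed

lemma diff_graph_eq_graph_transpose:
  assumes "gen_tournament n B"
  shows "diff_graph n A B = eq_graph n A B\<^sup>T"
proof -
  have "(i,j) \<in> diff_graph n A B \<longleftrightarrow> (i,j) \<in> eq_graph n A B\<^sup>T" for i j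
  proof (cases "i < n \<and> j < n \<and> i \<noteq> j")
    case True
    moreover have "dim_row B = n" "dim_col B = n" using gen_tournament_carrier[OF assms] by auto
    ultimately have "B\<^sup>T $$ (i,j) = 1 - B $$ (i,j)" "B\<^sup>T $$ (j,i) = 1 - B $$ (j,i)"
      using gen_tournament_antisym[OF assms, of i j] gen_tournament_antisym[OF assms, of j i] by auto
    then show ?thesis unfolding diff_graph_def eq_graph_def by auto
  next
    case False
    then show ?thesis unfolding diff_graph_def eq_graph_def by auto
  qed
  then show ?thesis by (auto simp: set_eq_iff)
qed

theorem proposition4p3:
  fixes n :: nat and A B :: "real mat"
  assumes "gen_tournament n A" and "gen_tournament n B"
    and "same_principal_minors n 2 A B" and "same_principal_minors n 3 A B"
  shows "\<forall>C \<in> components n (eq_graph n A B) \<union> components n (diff_graph n A B).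
           clan n A C \<and> clan n B C"
proof
  fix C assume "C \<in> components n (eq_graph n A B) \<union> components n (diff_graph n A B)"
  then consider "C \<in> components n (eq_graph n A B)" | "C \<in> components n (eq_graph n A B\<^sup>T)"
    unfolding diff_graph_eq_graph_transpose[OF assms(2)] by blast
  then show "clan n A C \<and> clan n B C"
  proof cases
    case 1
    then show ?thesis using eq_graph_component_clan[OF assms] by blast
  next
    case 2
    have B: "B \<in> carrier_mat n n" using gen_tournament_carrier[OF assms(2)] .
    have "clan n A C" "clan n B\<^sup>T C"
      using eq_graph_component_clan[OF assms(1) gen_tournament_transpose[OF assms(2)]
          same_principal_minors_transpose[OF B assms(3)] same_principal_minors_transpose[OF B assms(4)] 2] .
    then show ?thesis using clan_transpose[of "B\<^sup>T" n C] B by simp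
  qed
qed

end
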